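(* Let $(\mathcal{S},\mathcal{A})$ be a finite directed acyclic graph with a unique initial state $s_0$, a unique sink state $s_f$, and a set of terminating states $\mathcal{X}\subset\mathcal{S}$ (the states having an edge to $s_f$). Let $k\ge 1$ and for each $i\in\{1,\dots,k\}$ let $p_{i,F}$ be a forward policy on this graph whose induced terminating state distribution is $p_i(x)=R_i(x)/Z_i$ for $x\in\mathcal{X}$, where $R_i:\mathcal{X}\to[0,\infty)$ and $Z_i=\sum_{x\in\mathcal{X}}R_i(x)>0$. Let $u_i$ denote the reaching probability under $p_{i,F}$. Let $\omega_1,\dots,\omega_k\ge 0$ and let $\mathcal{G}(a_1,\dots,a_k)=\sum_{i=1}^k\omega_i Z_i a_i$. Define the mixing policy $$p_{M,F}(s'\mid s)=\frac{\mathcal{G}\bigl(u_1(s)p_{1,F}(s'\mid s),\dots,u_k(s)p_{k,F}(s'\mid s)\bigr)}{N_M(s)},\qquad N_M(s)=\sum_{s':(s\to s')\in\mathcal{A}}\mathcal{G}\bigl(u_1(s)p_{1,F}(s'\mid s),\dots,u_k(s)p_{k,F}(s'\mid s)\bigr).$$ Then the terminating state distribution $p_M$ induced by $p_{M,F}$ exactly equals the target distribution $p_M^*$, i.e. $p_M(x)=p_M^*(x)\propto\sum_{i=1}^k\omega_iR_i(x)$ for $x\in\mathcal{X}$.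
   Context: A forward policy $p_F$ assigns to each state $s\neq s_f$ a probability distribution $p_F(\cdot\mid s)$ over the children $s'$ of $s$ (states with $(s\to s')\in\mathcal{A}$). It induces a distribution over complete trajectories $s_0\to s_1\to\cdots\to s_n=x\to s_f$ by multiplying transition probabilities. The reaching probability is $u(s)=\sum_{\tau\in\mathcal{T}_{s_0,s}}\prod_{t=1}^T p_F(s_t\mid s_{t-1})$, where $\mathcal{T}_{s_0,s}$ is the set of paths $s_0\to\cdots\to s_T=s$; equivalently $u(s_0)=1$ and $u(s)=\sum_{s_*:(s_*\to s)\in\mathcal{A}}u(s_* )p_F(s\mid s_* )$. The induced terminating state distribution is $p(x)=u(x)\,p_F(s_f\mid x)$ for $x\in\mathcal{X}$. *)

theory Defs
  imports Complex_Main
begin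

definition paths :: "('a \<times> 'a) set \<Rightarrow> 'a \<Rightarrow> 'a \<Rightarrow> 'a list set" where
  "paths A a b = {xs. xs \<noteq> [] \<and> hd xs = a \<and> last xs = b \<and>
                      (\<forall>i < length xs - 1. (xs ! i, xs ! Suc i) \<in> A)}"

definition reach :: "('a \<times> 'a) set \<Rightarrow> ('a \<Rightarrow> 'a \<Rightarrow> real) \<Rightarrow> 'a \<Rightarrow> 'a \<Rightarrow> real" where
  "reach A pF s0 s = (\<Sum>xs \<in> paths A s0 s. \<Prod>i < length xs - 1. pF (xs ! i) (xs ! Suc i))"

definition term_states :: "('a \<times> 'a) set \<Rightarrow> 'a \<Rightarrow> 'a set" where
  "term_states A sf = {x. (x, sf) \<in> A}"

definition term_dist :: "('a \<times> 'a) set \<Rightarrow> 'a \<Rightarrow> 'a \<Rightarrow> ('a \<Rightarrow> 'a \<Rightarrow> real) \<Rightarrow> 'a \<Rightarrow> real" where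
  "term_dist A s0 sf pF x = reach A pF s0 x * pF x sf"

definition forward_policy :: "'a set \<Rightarrow> ('a \<times> 'a) set \<Rightarrow> 'a \<Rightarrow> ('a \<Rightarrow> 'a \<Rightarrow> real) \<Rightarrow> bool" where
  "forward_policy S A sf pF \<longleftrightarrow>
     (\<forall>s \<in> S. s \<noteq> sf \<longrightarrow>
        (\<forall>s'. (s, s') \<in> A \<longrightarrow> 0 \<le> pF s s') \<and> (\<Sum>s' \<in> {s'. (s, s') \<in> A}. pF s s') = 1)"

definition mixG :: "nat \<Rightarrow> (nat \<Rightarrow> real) \<Rightarrow> (nat \<Rightarrow> real) \<Rightarrow> (nat \<Rightarrow> real) \<Rightarrow> real" where
  "mixG k \<omega> Z a = (\<Sum>i = 1..k. \<omega> i * Z i * a i)"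

definition mix_policy :: "('a \<times> 'a) set \<Rightarrow> 'a \<Rightarrow> nat \<Rightarrow> (nat \<Rightarrow> real) \<Rightarrow> (nat \<Rightarrow> real)
     \<Rightarrow> (nat \<Rightarrow> 'a \<Rightarrow> 'a \<Rightarrow> real) \<Rightarrow> 'a \<Rightarrow> 'a \<Rightarrow> real" where
  "mix_policy A s0 k \<omega> Z pF s s' =
     mixG k \<omega> Z (\<lambda>i. reach A (pF i) s0 s * pF i s s') /
     (\<Sum>t \<in> {t. (s, t) \<in> A}. mixG k \<omega> Z (\<lambda>i. reach A (pF i) s0 s * pF i s t))"

end

theory Submission
  imports Defs
begin

text \<open>Write \<open>F(s) = G(u\<^sub>1(s), \<dots>, u\<^sub>k(s))\<close>. Because \<open>G\<close> is linear and each \<open>p\<^sub>i\<^sub>,\<^sub>F(\<cdot> | s)\<close>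
  sums to one over the children of \<open>s\<close>, the normaliser \<open>N\<^sub>M(s)\<close> equals \<open>F(s)\<close>, so
  \<open>F(s) p\<^sub>M\<^sub>,\<^sub>F(s' | s) = G(u\<^sub>1(s) p\<^sub>1\<^sub>,\<^sub>F(s' | s), \<dots>)\<close> on every edge. Summing over the
  parents of a state shows that \<open>F\<close> satisfies the forward recursion of the reaching probability
  \<open>u\<^sub>M\<close> of the mixing policy, with \<open>F(s\<^sub>0) = G(1, \<dots>, 1)\<close>; on a finite acyclic graph the
  recursion has a unique solution up to scaling, hence \<open>G(1, \<dots>, 1) u\<^sub>M = F\<close>. At the edge
  \<open>x \<rightarrow> s\<^sub>f\<close> this gives \<open>G(1, \<dots>, 1) p\<^sub>M(x) = G(p\<^sub>1(x), \<dots>, p\<^sub>k(x)) = \<Sum>\<^sub>i \<omega>\<^sub>i R\<^sub>i(x)\<close>,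
  and \<open>G(1, \<dots>, 1) = \<Sum>\<^sub>i \<omega>\<^sub>i Z\<^sub>i\<close> is the normalising constant.\<close>

lemma paths_conv_successively:
  "paths A a b = {xs. xs \<noteq> [] \<and> hd xs = a \<and> last xs = b \<and> successively (\<lambda>x y. (x, y) \<in> A) xs}"
  by (simp add: paths_def successively_conv_nth less_diff_conv)

lemma successively_in_trancl:
  assumes "successively (\<lambda>x y. (x, y) \<in> A) (x # xs)" "y \<in> set xs"
  shows "(x, y) \<in> A\<^sup>+"
  using assms by (induction xs arbitrary: x) (auto simp: successively_Cons intro: trancl_into_trancl2)

lemma distinct_if_successively_acyclic:
  assumes "acyclic A" "successively (\<lambda>x y. (x, y) \<in> A) xs"
  shows "distinct xs"
  using assms(2)
proof (induction xs)
  case (Cons x xs)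
  then show ?case
    using assms(1) successively_in_trancl[OF Cons.prems] by (auto simp: successively_Cons acyclic_def)
qed simp

lemma finite_paths:
  assumes "finite A" "acyclic A"
  shows "finite (paths A a b)"
proof (rule finite_subset)
  show "paths A a b \<subseteq> {xs. set xs \<subseteq> insert a (Range A) \<and> distinct xs}"
  proof (clarify)
    fix xs assume xs: "xs \<in> paths A a b"
    then have succ: "successively (\<lambda>x y. (x, y) \<in> A) xs"
      by (simp add: paths_conv_successively)
    have xs_eq: "xs = a # tl xs"
      using xs by (cases xs) (auto simp: paths_def)
    have "(a, y) \<in> A\<^sup>+" if "y \<in> set (tl xs)" for y
      using successively_in_trancl[of A a "tl xs" y] succ xs_eq that by simp
    then have "set (tl xs) \<subseteq> Range A"
      by (metis RangeI subsetI trancl_range)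
    then show "set xs \<subseteq> insert a (Range A) \<and> distinct xs"
      using distinct_if_successively_acyclic[OF assms(2) succ] xs_eq by (metis set_simps(2) insert_mono)
  qed
  show "finite {xs. set xs \<subseteq> insert a (Range A) \<and> distinct xs}"
    using assms(1) by (intro finite_subset_distinct) (simp add: finite_Range)
qed

lemma path_in_trancl:
  assumes "xs \<in> paths A a b" "tl xs \<noteq> []"
  shows "(a, b) \<in> A\<^sup>+"
proof (cases xs)
  case (Cons x ys)
  with assms show ?thesis
    by (auto simp: paths_conv_successively intro: successively_in_trancl)
qed (use assms in simp)

lemma paths_self:
  assumes "acyclic A"
  shows "paths A a a = {[a]}"
proof -
  have "xs = [a]" if "xs \<in> paths A a a" for xs
    using that path_in_trancl[OF that] assms by (cases xs) (auto simp: paths_def acyclic_def)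
  then show ?thesis by (auto simp: paths_def)
qed

lemma paths_snoc:
  assumes "b \<noteq> a"
  shows "paths A a b = (\<Union>t\<in>{t. (t, b) \<in> A}. (\<lambda>ys. ys @ [b]) ` paths A a t)"
proof (intro equalityI subsetI)
  fix xs assume xs: "xs \<in> paths A a b"
  then obtain ys where "xs = ys @ [b]"
    by (cases xs rule: rev_cases) (auto simp: paths_def)
  with xs assms show "xs \<in> (\<Union>t\<in>{t. (t, b) \<in> A}. (\<lambda>ys. ys @ [b]) ` paths A a t)"
    by (cases "ys = []") (auto simp: paths_conv_successively successively_append_iff)
qed (auto simp: paths_conv_successively successively_append_iff)

lemma reach_self:
  assumes "acyclic A"
  shows "reach A p a a = 1"
  by (simp add: reach_def paths_self[OF assms])

lemma reach_nonneg:
  assumes "\<And>s t. (s, t) \<in> A \<Longrightarrow> 0 \<le> p s t"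
  shows "0 \<le> reach A p a b"
  unfolding reach_def using assms by (intro sum_nonneg prod_nonneg) (auto simp: paths_def)

lemma prod_path_snoc:
  assumes "ys \<noteq> []"
  shows "(\<Prod>i < length ys. p ((ys @ [b]) ! i) ((ys @ [b]) ! Suc i))
       = (\<Prod>i < length ys - 1. p (ys ! i) (ys ! Suc i)) * p (last ys) b"
proof -
  obtain n where n: "length ys = Suc n" using assms by (cases ys) auto
  have "(\<Prod>i < n. p ((ys @ [b]) ! i) ((ys @ [b]) ! Suc i)) = (\<Prod>i < n. p (ys ! i) (ys ! Suc i))"
    by (rule prod.cong) (auto simp: nth_append n)
  then show ?thesis using n assms by (simp add: nth_append last_conv_nth)
qed

lemma reach_unfold:
  assumes "finite A" "acyclic A" "b \<noteq> a"
  shows "reach A p a b = (\<Sum>t | (t, b) \<in> A. reach A p a t * p t b)"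
proof -
  let ?w = "\<lambda>xs. \<Prod>i < length xs - 1. p (xs ! i) (xs ! Suc i)"
  have fin_pred: "finite {t. (t, b) \<in> A}"
    using finite_Domain[OF assms(1)] by (rule rev_finite_subset) auto
  have "reach A p a b = (\<Sum>t | (t, b) \<in> A. sum ?w ((\<lambda>ys. ys @ [b]) ` paths A a t))"
    unfolding reach_def paths_snoc[OF assms(3)]
    using fin_pred finite_paths[OF assms(1,2)]
    by (intro sum.UNION_disjoint) (auto simp: paths_def)
  also have "\<dots> = (\<Sum>t | (t, b) \<in> A. \<Sum>ys \<in> paths A a t. ?w ys * p t b)"
  proof (rule sum.cong[OF refl])
    fix t
    show "sum ?w ((\<lambda>ys. ys @ [b]) ` paths A a t) = (\<Sum>ys \<in> paths A a t. ?w ys * p t b)"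
      by (subst sum.reindex) (auto simp: inj_on_def paths_def prod_path_snoc intro!: sum.cong)
  qed
  also have "\<dots> = (\<Sum>t | (t, b) \<in> A. reach A p a t * p t b)"
    by (simp add: reach_def sum_distrib_right)
  finally show ?thesis .
qed

lemma solution_eq_scaled_reach:
  assumes "finite A" "acyclic A"
    and "v a = c" "\<And>b. b \<noteq> a \<Longrightarrow> v b = (\<Sum>t | (t, b) \<in> A. v t * p t b)"
  shows "v b = c * reach A p a b"
proof (induction b rule: wf_induct_rule[OF finite_acyclic_wf[OF assms(1,2)]])
  case (1 b)
  show ?case
  proof (cases "b = a")
    case True
    then show ?thesis using assms(3) reach_self[OF assms(2)] by simp
  next
    case False
    then have "v b = (\<Sum>t | (t, b) \<in> A. c * reach A p a t * p t b)"
      using assms(4) 1 by simp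
    also have "\<dots> = c * reach A p a b"
      by (simp add: reach_unfold[OF assms(1,2) False] sum_distrib_left mult.assoc)
    finally show ?thesis .
  qed
qed

lemma sum_mult_divide_sum:
  fixes g :: "'b \<Rightarrow> real"
  assumes "finite B" "x \<in> B" "\<And>y. y \<in> B \<Longrightarrow> 0 \<le> g y"
  shows "sum g B * (g x / sum g B) = g x"
  using assms sum_nonneg_eq_0_iff[of B g] by (cases "sum g B = 0") auto

lemma sum_mixG: "(\<Sum>t \<in> B. mixG k \<omega> Z (f t)) = mixG k \<omega> Z (\<lambda>i. \<Sum>t \<in> B. f t i)"
  unfolding mixG_def by (subst sum.swap) (simp add: sum_distrib_left)

locale policy_mixture =
  fixes A :: "('a \<times> 'a) set" and s0 :: 'a and k :: nat and \<omega> Z :: "nat \<Rightarrow> real"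
    and pF :: "nat \<Rightarrow> 'a \<Rightarrow> 'a \<Rightarrow> real"
  assumes finite_edges: "finite A" and acyclic_edges: "acyclic A"
    and pF_nonneg: "\<And>i s t. i \<in> {1..k} \<Longrightarrow> (s, t) \<in> A \<Longrightarrow> 0 \<le> pF i s t"
    and pF_sum: "\<And>i s. i \<in> {1..k} \<Longrightarrow> s \<in> Domain A \<Longrightarrow> (\<Sum>t | (s, t) \<in> A. pF i s t) = 1"
    and \<omega>_nonneg: "\<And>i. i \<in> {1..k} \<Longrightarrow> 0 \<le> \<omega> i"
    and Z_nonneg: "\<And>i. i \<in> {1..k} \<Longrightarrow> 0 \<le> Z i"
begin

abbreviation pM :: "'a \<Rightarrow> 'a \<Rightarrow> real" where
  "pM \<equiv> mix_policy A s0 k \<omega> Z pF"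

lemma mixG_nonneg: "(\<And>i. i \<in> {1..k} \<Longrightarrow> 0 \<le> a i) \<Longrightarrow> 0 \<le> mixG k \<omega> Z a"
  unfolding mixG_def using \<omega>_nonneg Z_nonneg by (intro sum_nonneg mult_nonneg_nonneg) auto

lemma mix_policy_flow:
  assumes "(s, t) \<in> A"
  shows "mixG k \<omega> Z (\<lambda>i. reach A (pF i) s0 s) * pM s t
       = mixG k \<omega> Z (\<lambda>i. reach A (pF i) s0 s * pF i s t)"
proof -
  let ?g = "\<lambda>t. mixG k \<omega> Z (\<lambda>i. reach A (pF i) s0 s * pF i s t)"
  have "sum ?g {t. (s, t) \<in> A} = mixG k \<omega> Z (\<lambda>i. reach A (pF i) s0 s * (\<Sum>t | (s, t) \<in> A. pF i s t))"
    by (simp add: sum_mixG sum_distrib_left)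
  also have "\<dots> = mixG k \<omega> Z (\<lambda>i. reach A (pF i) s0 s)"
    using assms by (simp add: mixG_def pF_sum Domain.intros)
  finally have "sum ?g {t. (s, t) \<in> A} = mixG k \<omega> Z (\<lambda>i. reach A (pF i) s0 s)" .
  moreover have "finite {t. (s, t) \<in> A}"
    using finite_Range[OF finite_edges] by (rule rev_finite_subset) auto
  moreover have "0 \<le> ?g t'" if "(s, t') \<in> A" for t'
    using that pF_nonneg by (intro mixG_nonneg mult_nonneg_nonneg reach_nonneg) auto
  ultimately show ?thesis
    using sum_mult_divide_sum[of "{t. (s, t) \<in> A}" t ?g] assms by (simp add: mix_policy_def)
qed

lemma reach_mix_policy:
  "mixG k \<omega> Z (\<lambda>_. 1) * reach A pM s0 s = mixG k \<omega> Z (\<lambda>i. reach A (pF i) s0 s)"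
proof (rule solution_eq_scaled_reach[OF finite_edges acyclic_edges, symmetric])
  show "mixG k \<omega> Z (\<lambda>i. reach A (pF i) s0 s0) = mixG k \<omega> Z (\<lambda>_. 1)"
    by (simp add: reach_self[OF acyclic_edges])
next
  fix b assume "b \<noteq> s0"
  then show "mixG k \<omega> Z (\<lambda>i. reach A (pF i) s0 b)
           = (\<Sum>t | (t, b) \<in> A. mixG k \<omega> Z (\<lambda>i. reach A (pF i) s0 t) * pM t b)"
    by (simp add: mix_policy_flow sum_mixG reach_unfold[OF finite_edges acyclic_edges])
qed

lemma term_dist_mix_policy:
  assumes "(x, sf) \<in> A"
  shows "mixG k \<omega> Z (\<lambda>_. 1) * term_dist A s0 sf pM x = mixG k \<omega> Z (\<lambda>i. term_dist A s0 sf (pF i) x)"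
  using mix_policy_flow[OF assms] reach_mix_policy[of x]
  by (simp add: term_dist_def mult.assoc[symmetric])

lemma mix_policy_degenerate:
  assumes "mixG k \<omega> Z (\<lambda>_. 1) = 0"
  shows "pM s t = 0"
proof -
  have "\<forall>i \<in> {1..k}. \<omega> i * Z i = 0"
    using assms \<omega>_nonneg Z_nonneg by (subst sum_nonneg_eq_0_iff[symmetric]) (auto simp: mixG_def)
  then have "mixG k \<omega> Z a = 0" for a
    unfolding mixG_def by (intro sum.neutral) simp
  then show ?thesis by (simp add: mix_policy_def)
qed

lemma term_dist_mix_policy_eq_divide:
  assumes "(x, sf) \<in> A"
  shows "term_dist A s0 sf pM x = mixG k \<omega> Z (\<lambda>i. term_dist A s0 sf (pF i) x) / mixG k \<omega> Z (\<lambda>_. 1)"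
proof (cases "mixG k \<omega> Z (\<lambda>_. 1) = 0")
  case True
  then show ?thesis by (simp add: term_dist_def mix_policy_degenerate)
next
  case False
  then show ?thesis using term_dist_mix_policy[OF assms] by (simp add: eq_divide_eq mult.commute)
qed

end

lemma policy_mixtureI:
  assumes "A \<subseteq> S \<times> S" "finite S" "acyclic A" "\<forall>s. (sf, s) \<notin> A"
    and "\<forall>i \<in> {1..k}. forward_policy S A sf (pF i)"
    and "\<forall>i \<in> {1..k}. 0 \<le> \<omega> i" "\<forall>i \<in> {1..k}. 0 \<le> Z i"
  shows "policy_mixture A k \<omega> Z pF"
proof
  have source: "s \<in> S" "s \<noteq> sf" if "(s, t) \<in> A" for s t
    using that assms(1,4) by auto
  show "finite A"
    using assms(2) by (intro finite_subset[OF assms(1)]) simp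
  show "acyclic A" by (fact assms(3))
  show "0 \<le> pF i s t" if "i \<in> {1..k}" "(s, t) \<in> A" for i s t
    using assms(5) source that unfolding forward_policy_def by blast
  show "(\<Sum>t | (s, t) \<in> A. pF i s t) = 1" if "i \<in> {1..k}" "s \<in> Domain A" for i s
    using assms(5) source that unfolding forward_policy_def by blast
qed (use assms(6,7) in auto)

theorem proposition4p1:
  fixes S :: "'a set" and A :: "('a \<times> 'a) set" and s0 sf :: 'a
    and k :: nat and pF :: "nat \<Rightarrow> 'a \<Rightarrow> 'a \<Rightarrow> real" and R :: "nat \<Rightarrow> 'a \<Rightarrow> real"
    and \<omega> :: "nat \<Rightarrow> real"
  assumes finS: "finite S"
    and AS: "A \<subseteq> S \<times> S"
    and acyc: "acyclic A"
    and s0S: "s0 \<in> S" and sfS: "sf \<in> S"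
    and s0_init: "\<forall>s. (s, s0) \<notin> A"
    and s0_unique: "\<forall>s \<in> S. s \<noteq> s0 \<longrightarrow> (\<exists>t. (t, s) \<in> A)"
    and sf_sink: "\<forall>s. (sf, s) \<notin> A"
    and sf_unique: "\<forall>s \<in> S. s \<noteq> sf \<longrightarrow> (\<exists>t. (s, t) \<in> A)"
    and k: "k \<ge> 1"
    and pol: "\<forall>i \<in> {1..k}. forward_policy S A sf (pF i)"
    and Rnn: "\<forall>i \<in> {1..k}. \<forall>x \<in> term_states A sf. 0 \<le> R i x"
    and Zpos: "\<forall>i \<in> {1..k}. (\<Sum>x \<in> term_states A sf. R i x) > 0"
    and match: "\<forall>i \<in> {1..k}. \<forall>x \<in> term_states A sf.
                  term_dist A s0 sf (pF i) x = R i x / (\<Sum>y \<in> term_states A sf. R i y)"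
    and \<omega>nn: "\<forall>i \<in> {1..k}. 0 \<le> \<omega> i"
  shows "\<forall>x \<in> term_states A sf.
           term_dist A s0 sf
             (mix_policy A s0 k \<omega> (\<lambda>i. \<Sum>y \<in> term_states A sf. R i y) pF) x
         = (\<Sum>i = 1..k. \<omega> i * R i x) / (\<Sum>y \<in> term_states A sf. \<Sum>i = 1..k. \<omega> i * R i y)"
proof
  \<comment> \<open>Acyclicity alone gives \<open>u(s\<^sub>0) = 1\<close>.\<close>
  define Z where "Z = (\<lambda>i. \<Sum>y \<in> term_states A sf. R i y)"
  have Z_pos: "0 < Z i" if "i \<in> {1..k}" for i
    using Zpos that by (simp add: Z_def)
  interpret policy_mixture A s0 k \<omega> Z pF
    using AS finS acyc sf_sink pol \<omega>nn Z_pos by (intro policy_mixtureI) (auto intro: less_imp_le)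
  fix x assume x: "x \<in> term_states A sf"
  have "mixG k \<omega> Z (\<lambda>i. term_dist A s0 sf (pF i) x) = (\<Sum>i = 1..k. \<omega> i * R i x)"
    unfolding mixG_def
  proof (rule sum.cong[OF refl])
    fix i assume i: "i \<in> {1..k}"
    show "\<omega> i * Z i * term_dist A s0 sf (pF i) x = \<omega> i * R i x"
      using match i x Z_pos[OF i] by (simp add: Z_def)
  qed
  moreover have "mixG k \<omega> Z (\<lambda>_. 1) = (\<Sum>y \<in> term_states A sf. \<Sum>i = 1..k. \<omega> i * R i y)"
    unfolding mixG_def Z_def by (subst sum.swap) (simp add: sum_distrib_left)
  ultimately show "term_dist A s0 sf pM x
      = (\<Sum>i = 1..k. \<omega> i * R i x) / (\<Sum>y \<in> term_states A sf. \<Sum>i = 1..k. \<omega> i * R i y)"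
    using term_dist_mix_policy_eq_divide x by (simp add: term_states_def)
qed

end
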